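(* Let $X$ be a non-empty set, $R$ a binary relation on $X$, and $\tau$ a compact topology on $X$. Suppose $R$ is upper tc-semicontinuous with respect to $\tau$. Then there exists a non-empty $w$-stable set of $(X,R)$.
   Context: For a binary relation $R$ on $X$, the transitive closure $\overline{R}$ is defined by: $x\overline{R}y$ iff there exist $K\ge 1$ and $x_0,\dots,x_K\in X$ with $x_0=x$, $x_K=y$, and $x_{k-1}Rx_k$ for all $k\in\{1,\dots,K\}$. A set $F\subseteq X$ is a $w$-stable set of $(X,R)$ if (i) (internal stability) for all distinct $x,y\in F$, $(x,y)\notin\overline{R}$; and (ii) (external stability) for all $x\in F$ and $y\in X\setminus F$, if $y\overline{R}x$ then $x\overline{R}y$. $R$ is upper tc-semicontinuous with respect to $\tau$ if for every $x\in X$ the set $\{y\in X: x\overline{R}y\}$ is open in $\tau$. A topology is compact if every open cover of $X$ has a finite subcover. *)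

theory Defs
  imports "HOL-Analysis.Analysis"
begin

definition w_stable :: "'a set \<Rightarrow> ('a \<times> 'a) set \<Rightarrow> 'a set \<Rightarrow> bool" where
  "w_stable X R F \<longleftrightarrow> F \<subseteq> X \<and>
     (\<forall>x\<in>F. \<forall>y\<in>F. x \<noteq> y \<longrightarrow> (x, y) \<notin> R\<^sup>+) \<and>
     (\<forall>x\<in>F. \<forall>y\<in>X - F. (y, x) \<in> R\<^sup>+ \<longrightarrow> (x, y) \<in> R\<^sup>+)"

definition upper_tc_semicontinuous :: "'a topology \<Rightarrow> ('a \<times> 'a) set \<Rightarrow> bool" where
  "upper_tc_semicontinuous T R \<longleftrightarrow>
     (\<forall>x\<in>topspace T. openin T {y \<in> topspace T. (x, y) \<in> R\<^sup>+})"

end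

theory Submission
  imports Defs
begin

text \<open>An element x is maximal for the transitive closure if everything reaching x is reached
  back from x; then {x} is w-stable. If no such x existed, the open upper contour sets would
  cover the compact space, a finite subcover would be indexed by a finite set S, and an element
  maximal within S (which exists by induction on S) would be reached from the whole space,
  hence maximal outright.\<close>

definition maximal_in :: "('a \<times> 'a) set \<Rightarrow> 'a set \<Rightarrow> 'a \<Rightarrow> bool" where
  "maximal_in P A x \<longleftrightarrow> x \<in> A \<and> (\<forall>y\<in>A. (y, x) \<in> P \<longrightarrow> (x, y) \<in> P)"

lemma finite_has_maximal_in:
  assumes "finite S" "S \<noteq> {}" "trans P"
  shows "\<exists>y. maximal_in P S y"
  using assms(1,2)
proof (induction S rule: finite_ne_induct)
  case (singleton x)
  show ?case unfolding maximal_in_def by auto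
next
  case (insert x S)
  then obtain y where y: "maximal_in P S y" by blast
  show ?case
  proof (cases "(x, y) \<in> P \<and> (y, x) \<notin> P")
    case True
    have "(z, x) \<notin> P" if "z \<in> S" for z
    proof
      assume "(z, x) \<in> P"
      with True have "(z, y) \<in> P" using \<open>trans P\<close> by (meson transD)
      with y that have "(y, z) \<in> P" unfolding maximal_in_def by blast
      with \<open>(z, x) \<in> P\<close> have "(y, x) \<in> P" using \<open>trans P\<close> by (meson transD)
      with True show False by blast
    qed
    then have "maximal_in P (insert x S) x" unfolding maximal_in_def by blast
    then show ?thesis by blast
  next
    case False
    with y have "maximal_in P (insert x S) y" unfolding maximal_in_def by blast
    then show ?thesis by blast
  qed
qed

lemma compact_space_has_maximal_in:
  assumes "compact_space T" "topspace T \<noteq> {}" "trans P"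
    and upper_open: "\<And>x. x \<in> topspace T \<Longrightarrow> openin T {y \<in> topspace T. (x, y) \<in> P}"
  shows "\<exists>x. maximal_in P (topspace T) x"
proof (rule ccontr)
  assume no_max: "\<nexists>x. maximal_in P (topspace T) x"
  define U where "U x = {y \<in> topspace T. (x, y) \<in> P}" for x
  have "topspace T \<subseteq> \<Union>(U ` topspace T)"
  proof
    fix z assume "z \<in> topspace T"
    with no_max obtain x where "x \<in> topspace T" "(x, z) \<in> P"
      unfolding maximal_in_def by blast
    with \<open>z \<in> topspace T\<close> show "z \<in> \<Union>(U ` topspace T)" unfolding U_def by blast
  qed
  moreover have "\<forall>V\<in>U ` topspace T. openin T V" using upper_open unfolding U_def by blast
  ultimately obtain \<F> where \<F>: "finite \<F>" "\<F> \<subseteq> U ` topspace T" "topspace T \<subseteq> \<Union>\<F>"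
    using \<open>compact_space T\<close> unfolding compact_space_alt by meson
  then obtain S where S: "S \<subseteq> topspace T" "finite S" "\<F> = U ` S"
    using finite_subset_image by blast
  with \<F> have cover: "topspace T \<subseteq> \<Union>(U ` S)" by simp
  with \<open>topspace T \<noteq> {}\<close> have "S \<noteq> {}" by blast
  with S \<open>trans P\<close> obtain y where y: "maximal_in P S y" using finite_has_maximal_in by blast
  with S(1) no_max obtain z where z: "z \<in> topspace T" "(z, y) \<in> P" "(y, z) \<notin> P"
    unfolding maximal_in_def by blast
  with cover obtain k where k: "k \<in> S" "(k, z) \<in> P" unfolding U_def by blast
  with z \<open>trans P\<close> have "(k, y) \<in> P" by (meson transD)
  with y k have "(y, k) \<in> P" unfolding maximal_in_def by blast
  with k \<open>trans P\<close> have "(y, z) \<in> P" by (meson transD)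
  with z show False by blast
qed

lemma w_stable_singleton_maximal_in:
  assumes "maximal_in (R\<^sup>+) X x"
  shows "w_stable X R {x}"
  using assms unfolding maximal_in_def w_stable_def by blast

theorem lemma1:
  fixes X :: "'a set" and R :: "('a \<times> 'a) set" and T :: "'a topology"
  assumes "X \<noteq> {}"
    and "R \<subseteq> X \<times> X"
    and "topspace T = X"
    and "compact_space T"
    and "upper_tc_semicontinuous T R"
  shows "\<exists>F. F \<noteq> {} \<and> w_stable X R F"
proof -
  have "openin T {y \<in> topspace T. (x, y) \<in> R\<^sup>+}" if "x \<in> topspace T" for x
    using assms(5) that unfolding upper_tc_semicontinuous_def by blast
  with assms(1,3,4) obtain x where "maximal_in (R\<^sup>+) X x"
    using compact_space_has_maximal_in[OF _ _ trans_trancl] by metis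
  then have "w_stable X R {x}" by (rule w_stable_singleton_maximal_in)
  then show ?thesis by blast
qed

end
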